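(* For every $n\ge2$ and every generalised snake configuration $\bar\rho\in\mathcal{GS}_n$, $$\operatorname{sgn}(\bar\rho)(-1)^{S(\bar\rho)}=\sum_{\theta\in\{0,1\}^2}C_\theta\exp\Big(\frac{\pi i\theta_1}{n}\big(A(\bar\rho)+\tfrac12C(\bar\rho)\big)+\frac{\pi i\theta_2}{n}\big(B(\bar\rho)+\tfrac12C(\bar\rho)\big)\Big),$$ where $C_\theta=\tfrac12(-1)^{(\theta_1+n+1)(\theta_2+n+1)}$ and $\operatorname{sgn}(\bar\rho)$ is the sign of $\bar\rho$ as a permutation of $\mathbb{M}_n$.
   Context: $\mathbb{T}_n=(\mathbb{Z}/n\mathbb{Z})^2$, $e^1=(1,0)$, $e^2=(0,1)$, $e^3=\frac12(e^1+e^2)$; mid-edges $\mathbb{M}_n$ = black $\{v+\frac12e^1:v\in\mathbb{T}_n\}$ ⊔ white $\{v+\frac12e^2:v\in\mathbb{T}_n\}$, coordinates mod $n$. A generalised snake configuration is a permutation $\bar\rho$ of $\mathbb{M}_n$ with $\bar\rho(x)\in\{x,x+e^3,x+e^1\}$ ($x$ black), $\bar\rho(x)\in\{x,x+e^3,x+e^2\}$ ($x$ white); $\mathcal{GS}_n$ their set. $S(\bar\rho)$ = number of vertices $v$ with $\bar\rho(v-\frac12e^1)=v+\frac12e^1$ and $\bar\rho(v-\frac12e^2)=v+\frac12e^2$ (crossings); $A(\bar\rho),B(\bar\rho),C(\bar\rho)$ = numbers of $x\in\mathbb{M}_n$ with $\bar\rho(x)=x+e^1$, $x+e^2$, $x+e^3$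 respectively. *)

theory Defs
  imports "HOL-Analysis.Analysis" "HOL-Combinatorics.Permutations"
begin

text \<open>Mid-edges of the torus T_n = (Z/nZ)^2. A mid-edge is encoded as (c, i, j) with
  0 <= i, j < n: if c = True it is the black mid-edge (i,j) + e1/2,
  if c = False it is the white mid-edge (i,j) + e2/2.\<close>

type_synonym midedge = "bool \<times> int \<times> int"

definition midedges :: "nat \<Rightarrow> midedge set" where
  "midedges n = {(c, i, j). 0 \<le> i \<and> i < int n \<and> 0 \<le> j \<and> j < int n}"

text \<open>Translations by e1, e2, e3 = (e1+e2)/2 on mid-edges, coordinates mod n.\<close>
definition tr_e1 :: "nat \<Rightarrow> midedge \<Rightarrow> midedge" where
  "tr_e1 n x = (case x of (c, i, j) \<Rightarrow> (c, (i + 1) mod int n, j))"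

definition tr_e2 :: "nat \<Rightarrow> midedge \<Rightarrow> midedge" where
  "tr_e2 n x = (case x of (c, i, j) \<Rightarrow> (c, i, (j + 1) mod int n))"

text \<open>black v + e1/2 + e3 = (v + e1) + e2/2 (white); white v + e2/2 + e3 = (v + e2) + e1/2 (black).\<close>
definition tr_e3 :: "nat \<Rightarrow> midedge \<Rightarrow> midedge" where
  "tr_e3 n x = (case x of (c, i, j) \<Rightarrow>
     (if c then (False, (i + 1) mod int n, j) else (True, i, (j + 1) mod int n)))"

definition GS :: "nat \<Rightarrow> (midedge \<Rightarrow> midedge) set" where
  "GS n = {\<rho>. \<rho> permutes midedges n \<and>
     (\<forall>x\<in>midedges n.
        (fst x \<longrightarrow> \<rho> x \<in> {x, tr_e3 n x, tr_e1 n x}) \<and>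
        (\<not> fst x \<longrightarrow> \<rho> x \<in> {x, tr_e3 n x, tr_e2 n x}))}"

text \<open>Crossings: vertices v with rho(v - e1/2) = v + e1/2 and rho(v - e2/2) = v + e2/2.
  v - e1/2 is the black mid-edge at v - e1, v - e2/2 the white mid-edge at v - e2.\<close>
definition crossings :: "nat \<Rightarrow> (midedge \<Rightarrow> midedge) \<Rightarrow> nat" where
  "crossings n \<rho> = card {(i, j). 0 \<le> i \<and> i < int n \<and> 0 \<le> j \<and> j < int n \<and>
      \<rho> (True, (i - 1) mod int n, j) = (True, i, j) \<and>
      \<rho> (False, i, (j - 1) mod int n) = (False, i, j)}"

definition countA :: "nat \<Rightarrow> (midedge \<Rightarrow> midedge) \<Rightarrow> nat" where
  "countA n \<rho> = card {x \<in> midedges n. \<rho> x = tr_e1 n x}"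

definition countB :: "nat \<Rightarrow> (midedge \<Rightarrow> midedge) \<Rightarrow> nat" where
  "countB n \<rho> = card {x \<in> midedges n. \<rho> x = tr_e2 n x}"

definition countC :: "nat \<Rightarrow> (midedge \<Rightarrow> midedge) \<Rightarrow> nat" where
  "countC n \<rho> = card {x \<in> midedges n. \<rho> x = tr_e3 n x}"

end

theory Submission
  imports Defs
begin

text \<open>Order the moved mid-edges by the anti-diagonal \<open>i + j mod n\<close> they lie on and then
  by their position along it; the sign of \<open>\<rho>\<close> is \<open>-1\<close> to the number of inversions of this
  order. Every allowed move goes to the next anti-diagonal and advances the position by 0, 1
  or 2 (mod \<open>2n\<close>), so all anti-diagonals carry the same number \<open>m\<close> of moved mid-edges.
  A pair is inverted because one of them leaves the last anti-diagonal for the first, because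
  on a common anti-diagonal one of them wraps around the last position \<open>2n - 1\<close>, or because
  they cross; crossings over the last position are exactly the crossings that are not
  inversions. Counting gives \<open>sgn \<rho> (-1)^S = (-1)^((n-1) m + (m+1) W)\<close>, where \<open>W\<close> is the
  number of wrapping moves. Finally the total advance \<open>2A + C\<close> is \<open>2nW\<close> and
  \<open>A + B + C = nm\<close>, so each exponential equals \<open>(-1)^(\<theta>1 W + \<theta>2 (m - W))\<close> and the four
  terms add up to the same sign.\<close>

section \<open>Sign and inversions\<close>

definition inversions :: "('a \<Rightarrow> int) \<Rightarrow> ('a \<Rightarrow> int) \<Rightarrow> 'a set \<Rightarrow> nat" where
  "inversions k f T = (\<Sum>p\<in>T. \<Sum>q\<in>T. if k p < k q \<and> f q < f p then 1 else 0)"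

lemma inversions_insert:
  assumes "finite T" "t \<notin> T"
  shows "inversions k f (insert t T) = inversions k f T
           + (\<Sum>p\<in>T. if k p < k t \<and> f t < f p then 1 else 0)
           + (\<Sum>q\<in>T. if k t < k q \<and> f q < f t then 1 else 0)"
  using assms by (simp add: inversions_def sum.distrib algebra_simps)

lemma inversions_insert_max:
  assumes "finite T" "\<And>p. p \<in> T \<Longrightarrow> k p < k t"
  shows "inversions k f (insert t T) = inversions k f T + (\<Sum>p\<in>T. if f t < f p then 1 else 0)"
proof -
  have "t \<notin> T" using assms(2) by blast
  moreover have "(\<Sum>q\<in>T. if k t < k q \<and> f q < f t then 1 else 0) = (0::nat)"
    using assms(2) by (intro sum.neutral) force
  ultimately show ?thesis
    using assms by (simp add: inversions_insert cong: if_cong)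
qed

lemma inversions_cong:
  "(\<And>x. x \<in> T \<Longrightarrow> f x = g x) \<Longrightarrow> inversions k f T = inversions k g T"
  unfolding inversions_def by (intro sum.cong refl) auto

lemma inversions_fixed_max:
  assumes "finite T" "\<sigma> permutes T" "t \<in> T" "\<And>p. p \<in> T \<Longrightarrow> p \<noteq> t \<Longrightarrow> k p < k t" "\<sigma> t = t"
  shows "inversions k (k \<circ> \<sigma>) T = inversions k (k \<circ> \<sigma>) (T - {t})"
proof -
  have "k (\<sigma> p) < k t" if "p \<in> T - {t}" for p
    using assms that by (metis DiffE insertI1 permutes_in_image permutes_inj inj_eq)
  then have "(\<Sum>p\<in>T - {t}. if (k \<circ> \<sigma>) t < (k \<circ> \<sigma>) p then 1 else 0) = (0::nat)"
    using assms(5) by (intro sum.neutral ballI) (simp, meson not_less_iff_gr_or_eq)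
  moreover have "T = insert t (T - {t})" using assms(3) by blast
  ultimately show ?thesis
    using inversions_insert_max[of "T - {t}" k t "k \<circ> \<sigma>"] assms by auto
qed

context
  fixes k :: "'a \<Rightarrow> int" and \<sigma> :: "'a \<Rightarrow> 'a" and T :: "'a set" and t u :: 'a
  assumes fin: "finite T" and inj: "inj_on k T" and perm: "\<sigma> permutes T"
    and tT: "t \<in> T" and max: "\<And>p. p \<in> T \<Longrightarrow> p \<noteq> t \<Longrightarrow> k p < k t"
    and uT: "u \<in> T" and ut: "u \<noteq> t" and su: "\<sigma> u = t"
begin

lemma swap_max_facts:
  shows "k (\<sigma> t) < k t"
    and "q \<in> T - {t, u} \<Longrightarrow> k (\<sigma> q) < k t \<and> k (\<sigma> q) \<noteq> k (\<sigma> t) \<and> k q \<noteq> k u"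
proof -
  have \<sigma>_eq: "\<sigma> p = \<sigma> q \<longleftrightarrow> p = q" for p q
    using perm by (metis permutes_inj injD)
  have \<sigma>T: "p \<in> T \<Longrightarrow> \<sigma> p \<in> T" for p
    using perm by (simp add: permutes_in_image)
  have k_eq: "p \<in> T \<Longrightarrow> q \<in> T \<Longrightarrow> k p = k q \<longleftrightarrow> p = q" for p q
    using inj by (auto simp: inj_on_def)
  have "\<sigma> t \<noteq> t" by (metis su ut \<sigma>_eq)
  then show "k (\<sigma> t) < k t" using max \<sigma>T[OF tT] by simp
  assume q: "q \<in> T - {t, u}"
  then have "\<sigma> q \<noteq> t" "\<sigma> q \<noteq> \<sigma> t" using su \<sigma>_eq by auto
  then show "k (\<sigma> q) < k t \<and> k (\<sigma> q) \<noteq> k (\<sigma> t) \<and> k q \<noteq> k u"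
    using q max \<sigma>T tT uT k_eq by simp
qed

lemma inversions_moved_max:
  "inversions k (k \<circ> \<sigma>) T
     = inversions k (k \<circ> \<sigma>) (T - {t, u}) + (\<Sum>q\<in>T - {t, u}. if k u < k q then 1 else 0)
       + 1 + (\<Sum>p\<in>T - {t, u}. if k (\<sigma> t) < k (\<sigma> p) then 1 else 0)"
proof -
  define R where "R = T - {t, u}"
  have fin': "finite R" and u: "u \<notin> R" and T_eq: "T = insert t (insert u R)"
    using fin tT uT by (auto simp: R_def)
  have "inversions k (k \<circ> \<sigma>) (insert t (insert u R)) = inversions k (k \<circ> \<sigma>) (insert u R)
      + (\<Sum>p\<in>insert u R. if (k \<circ> \<sigma>) t < (k \<circ> \<sigma>) p then 1 else 0)"
    using fin' max uT ut by (intro inversions_insert_max) (auto simp: R_def)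
  then have "inversions k (k \<circ> \<sigma>) T = inversions k (k \<circ> \<sigma>) (insert u R)
      + (\<Sum>p\<in>insert u R. if k (\<sigma> t) < k (\<sigma> p) then 1 else 0)"
    unfolding T_eq by simp
  moreover have "(\<Sum>p\<in>insert u R. if k (\<sigma> t) < k (\<sigma> p) then 1 else (0::nat))
      = 1 + (\<Sum>p\<in>R. if k (\<sigma> t) < k (\<sigma> p) then 1 else 0)"
    using swap_max_facts(1) su fin' u by simp
  moreover have "(\<Sum>p\<in>R. if k p < k u \<and> k t < k (\<sigma> p) then 1 else 0) = (0::nat)"
    using swap_max_facts(2) by (intro sum.neutral ballI) (simp add: R_def, meson less_asym)
  moreover have "(\<Sum>q\<in>R. if k u < k q \<and> k (\<sigma> q) < k t then 1 else 0)
      = (\<Sum>q\<in>R. if k u < k q then 1 else (0::nat))"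
    using swap_max_facts(2) by (intro sum.cong refl) (auto simp: R_def)
  ultimately show ?thesis
    using inversions_insert[OF fin' u, of k "k \<circ> \<sigma>"] su by (simp add: R_def)
qed

lemma inversions_swapped_max:
  "inversions k (k \<circ> (\<sigma> \<circ> Transposition.transpose t u)) (T - {t})
     = inversions k (k \<circ> \<sigma>) (T - {t, u})
       + (\<Sum>p\<in>T - {t, u}. if k p < k u \<and> k (\<sigma> t) < k (\<sigma> p) then 1 else 0)
       + (\<Sum>q\<in>T - {t, u}. if k u < k q \<and> k (\<sigma> q) < k (\<sigma> t) then 1 else 0)"
proof -
  let ?\<sigma>' = "\<sigma> \<circ> Transposition.transpose t u"
  have fin': "finite (T - {t, u})" and u: "u \<notin> T - {t, u}"
    and T_eq: "T - {t} = insert u (T - {t, u})"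
    using fin uT ut by auto
  have "inversions k (k \<circ> ?\<sigma>') (T - {t, u}) = inversions k (k \<circ> \<sigma>) (T - {t, u})"
    by (rule inversions_cong) auto
  moreover have "(\<Sum>p\<in>T - {t, u}. if k p < k u \<and> k (\<sigma> t) < k (?\<sigma>' p) then 1 else 0)
      = (\<Sum>p\<in>T - {t, u}. if k p < k u \<and> k (\<sigma> t) < k (\<sigma> p) then 1 else (0::nat))"
    "(\<Sum>q\<in>T - {t, u}. if k u < k q \<and> k (?\<sigma>' q) < k (\<sigma> t) then 1 else 0)
      = (\<Sum>q\<in>T - {t, u}. if k u < k q \<and> k (\<sigma> q) < k (\<sigma> t) then 1 else (0::nat))"
    by (intro sum.cong refl; simp)+
  ultimately show ?thesis
    unfolding T_eq inversions_insert[OF fin' u] by simp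
qed

lemma inversions_swap_max:
  "odd (inversions k (k \<circ> \<sigma>) T + inversions k (k \<circ> (\<sigma> \<circ> Transposition.transpose t u)) (T - {t}))"
proof -
  let ?R = "T - {t, u}" and ?a = "k (\<sigma> t)"
  define K where "K = (\<Sum>q\<in>?R. if k u < k q \<and> ?a < k (\<sigma> q) then 1 else (0::nat))"
  have "(\<Sum>q\<in>?R. if k u < k q then 1 else (0::nat)) + (\<Sum>p\<in>?R. if ?a < k (\<sigma> p) then 1 else 0)
      = (\<Sum>p\<in>?R. if k p < k u \<and> ?a < k (\<sigma> p) then 1 else 0)
        + (\<Sum>q\<in>?R. if k u < k q \<and> k (\<sigma> q) < ?a then 1 else 0) + 2 * K"
    unfolding K_def sum.distrib[symmetric] sum_distrib_left
  proof (intro sum.cong refl)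
    fix q assume "q \<in> ?R"
    then have "k (\<sigma> q) \<noteq> ?a" "k q \<noteq> k u" using swap_max_facts(2) by auto
    then show "(if k u < k q then 1 else 0) + (if ?a < k (\<sigma> q) then 1 else 0)
      = (if k q < k u \<and> ?a < k (\<sigma> q) then 1 else 0)
        + (if k u < k q \<and> k (\<sigma> q) < ?a then 1 else 0)
        + 2 * (if k u < k q \<and> ?a < k (\<sigma> q) then 1 else (0::nat))"
      by auto
  qed
  then have "inversions k (k \<circ> \<sigma>) T
      = inversions k (k \<circ> (\<sigma> \<circ> Transposition.transpose t u)) (T - {t}) + 1 + 2 * K"
    using inversions_moved_max inversions_swapped_max by simp
  then show ?thesis by simp
qed

end

lemma sign_compose_transpose:
  "permutation \<sigma> \<Longrightarrow> a \<noteq> b \<Longrightarrow> sign (\<sigma> \<circ> Transposition.transpose a b) = - sign \<sigma>"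
  by (simp add: sign_compose permutation_swap_id sign_swap_id)

text \<open>Induction on \<open>T\<close>, removing the key-maximal \<open>t\<close>; if \<open>\<sigma>\<close> moves \<open>t\<close>, first compose
  with a transposition so that \<open>t\<close> becomes fixed, which changes the number of inversions by
  an odd amount.\<close>

theorem sign_eq_inversions:
  fixes k :: "'a \<Rightarrow> int"
  assumes "finite T" "inj_on k T" "\<sigma> permutes T"
  shows "sign \<sigma> = (-1) ^ inversions k (k \<circ> \<sigma>) T"
  using assms
proof (induction "card T" arbitrary: T \<sigma>)
  case 0
  then have "T = {}" "\<sigma> = id" by auto
  then show ?case by (simp add: inversions_def)
next
  case (Suc N)
  then have "k ` T \<noteq> {}" by auto
  then obtain t where tT: "t \<in> T" and "k t = Max (k ` T)"
    using Max_in Suc.prems(1) by (metis finite_imageI imageE)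
  then have max: "k p < k t" if "p \<in> T" "p \<noteq> t" for p
    using that Suc.prems by (metis Max_ge finite_imageI image_eqI inj_on_eq_iff order_le_less)
  define T' where "T' = T - {t}"
  have IH: "sign \<sigma>' = (-1) ^ inversions k (k \<circ> \<sigma>') T'" if "\<sigma>' permutes T'" for \<sigma>'
    using Suc tT that by (intro Suc.hyps) (auto simp: T'_def inj_on_diff)
  show ?case
  proof (cases "\<sigma> t = t")
    case True
    have "\<sigma> permutes T'"
      using Suc.prems(3) True by (auto simp: T'_def intro: permutes_superset)
    then show ?thesis
      using IH inversions_fixed_max[where k=k, OF Suc.prems(1,3) tT max True] by (simp add: T'_def)
  next
    case False
    obtain u where uT: "u \<in> T" and su: "\<sigma> u = t"
      using Suc.prems(3) tT by (metis permutes_surj surjD permutes_not_in)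
    have ut: "u \<noteq> t" using False su by auto
    define \<sigma>' where "\<sigma>' = \<sigma> \<circ> Transposition.transpose t u"
    have perm': "\<sigma>' permutes T"
      unfolding \<sigma>'_def by (rule permutes_compose[OF permutes_swap_id[OF tT uT] Suc.prems(3)])
    have "\<sigma>' t = t" by (simp add: \<sigma>'_def su)
    then have "\<sigma>' permutes T'"
      using perm' by (auto simp: T'_def intro: permutes_superset)
    moreover have "sign \<sigma> = - sign \<sigma>'"
      using sign_compose_transpose[of \<sigma> t u] Suc.prems(1,3) ut
      by (simp add: \<sigma>'_def permutes_imp_permutation)
    moreover have "odd (inversions k (k \<circ> \<sigma>) T + inversions k (k \<circ> \<sigma>') T')"
      using inversions_swap_max[where k=k, OF Suc.prems tT max uT ut su] by (simp add: \<sigma>'_def T'_def)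
    ultimately show ?thesis
      using IH by (auto simp: neg_one_power_add_eq_neg_one_power_diff elim!: oddE)
  qed
qed

section \<open>Permutations advancing cyclic levels\<close>

lemma mod_eq_if_less_double:
  fixes x m :: int
  assumes "0 \<le> x" "x < 2 * m"
  shows "x mod m = (if m \<le> x then x - m else x)"
proof (cases "m \<le> x")
  case True
  have "x mod m = (x - m) mod m" by (metis diff_add_cancel mod_add_self2)
  also have "\<dots> = x - m" by (rule mod_pos_pos_trivial) (use assms True in auto)
  finally show ?thesis using True by simp
qed (use assms in simp)

lemma shift_parity_facts:
  fixes N a d :: int
  assumes "0 \<le> a" "a < 2 * N" "d \<in> {a mod 2, a mod 2 + 1}"
  shows "2 * N \<le> a + d \<longleftrightarrow> a = 2 * N - 1"
    and "0 \<le> d" "d \<le> 2" "d = 2 \<Longrightarrow> odd a" "d = 0 \<Longrightarrow> even a" "a = 2 * N - 1 \<Longrightarrow> 1 \<le> d"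
proof -
  have "a mod 2 = 0 \<and> even a \<or> a mod 2 = 1 \<and> odd a" by presburger
  moreover have "odd a \<Longrightarrow> a \<noteq> 2 * N - 2" "even a \<Longrightarrow> a \<noteq> 2 * N - 1" by presburger+
  ultimately show "2 * N \<le> a + d \<longleftrightarrow> a = 2 * N - 1" "0 \<le> d" "d \<le> 2" "d = 2 \<Longrightarrow> odd a"
    "d = 0 \<Longrightarrow> even a" "a = 2 * N - 1 \<Longrightarrow> 1 \<le> d"
    using assms by auto
qed

lemma same_level_inversion_identity:
  fixes N a b dp dq :: int
  assumes a: "0 \<le> a" "a < 2 * N" "dp \<in> {a mod 2, a mod 2 + 1}"
    and b: "0 \<le> b" "b < 2 * N" "dq \<in> {b mod 2, b mod 2 + 1}"
    and distinct: "a \<noteq> b \<Longrightarrow> (a + dp) mod (2 * N) \<noteq> (b + dq) mod (2 * N)"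
  shows "(if a < b \<and> (b + dq) mod (2 * N) < (a + dp) mod (2 * N) then 1 else 0)
       + (if dq = 2 \<and> dp = 0 \<and> a = (b + 1) mod (2 * N) \<and> b = 2 * N - 1 then 1 else 0)
     = (if b = 2 * N - 1 \<and> a \<noteq> b then 1 else 0)
       + (if dp = 2 \<and> dq = 0 \<and> b = (a + 1) mod (2 * N) \<and> a \<noteq> 2 * N - 1 then 1 else (0::nat))"
proof -
  note A = shift_parity_facts[OF a] and B = shift_parity_facts[OF b]
  have a': "(a + dp) mod (2 * N) = (if a = 2 * N - 1 then a + dp - 2 * N else a + dp)"
    using A(1-3) a(1,2) by (subst mod_eq_if_less_double) auto
  have b': "(b + dq) mod (2 * N) = (if b = 2 * N - 1 then b + dq - 2 * N else b + dq)"
    using B(1-3) b(1,2) by (subst mod_eq_if_less_double) auto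
  have a1: "(a + 1) mod (2 * N) = (if a = 2 * N - 1 then 0 else a + 1)"
    using a(1,2) by (subst mod_eq_if_less_double) auto
  have b1: "(b + 1) mod (2 * N) = (if b = 2 * N - 1 then 0 else b + 1)"
    using b(1,2) by (subst mod_eq_if_less_double) auto
  show ?thesis
  proof (cases "b = 2 * N - 1")
    case b_last: True
    then have "(b + dq) mod (2 * N) = dq - 1" using b' by simp
    moreover have "a \<noteq> b \<Longrightarrow> (a + dp) mod (2 * N) = a + dp" using a' b_last by auto
    ultimately show ?thesis
      using b_last distinct A B a unfolding a1 b1 by (cases "a = b") auto
  next
    case b_not_last: False
    then have bq: "(b + dq) mod (2 * N) = b + dq" using b' by simp
    show ?thesis
    proof (cases "a < b")
      case True
      then have "(a + dp) mod (2 * N) = a + dp" using a' b_not_last b by auto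
      then show ?thesis using True b_not_last bq A B distinct unfolding a1 b1 by auto
    next
      case False
      then show ?thesis using b_not_last a1 b1 by auto
    qed
  qed
qed

lemma pair_inversion_identity:
  fixes N Lp Lq a b dp dq :: int
  assumes levels: "0 \<le> Lp" "Lp < N" "0 \<le> Lq" "Lq < N"
    and a: "0 \<le> a" "a < 2 * N" "dp \<in> {a mod 2, a mod 2 + 1}"
    and b: "0 \<le> b" "b < 2 * N" "dq \<in> {b mod 2, b mod 2 + 1}"
    and distinct: "Lp = Lq \<Longrightarrow> a \<noteq> b \<Longrightarrow> (a + dp) mod (2 * N) \<noteq> (b + dq) mod (2 * N)"
  defines "Lp' \<equiv> (Lp + 1) mod N" and "Lq' \<equiv> (Lq + 1) mod N"
    and "a' \<equiv> (a + dp) mod (2 * N)" and "b' \<equiv> (b + dq) mod (2 * N)"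
  shows "(if (Lp < Lq \<or> Lp = Lq \<and> a < b) \<and> (Lq' < Lp' \<or> Lq' = Lp' \<and> b' < a') then 1 else 0)
       + (if dq = 2 \<and> dp = 0 \<and> Lq = Lp \<and> a = (b + 1) mod (2 * N) \<and> b = 2 * N - 1 then 1 else 0)
     = (if Lp < Lq \<and> Lq = N - 1 then 1 else 0)
       + (if Lp = Lq \<and> b = 2 * N - 1 \<and> a \<noteq> b then 1 else 0)
       + (if dp = 2 \<and> dq = 0 \<and> Lp = Lq \<and> b = (a + 1) mod (2 * N) \<and> a \<noteq> 2 * N - 1
          then 1 else (0::nat))"
proof (cases "Lp = Lq")
  case True
  then show ?thesis
    using same_level_inversion_identity[OF a b distinct]
    unfolding Lp'_def Lq'_def a'_def b'_def by auto
next
  case False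
  have "Lp' = (if Lp = N - 1 then 0 else Lp + 1)" "Lq' = (if Lq = N - 1 then 0 else Lq + 1)"
    using levels unfolding Lp'_def Lq'_def by (subst mod_eq_if_less_double; auto)+
  then have "(Lp < Lq \<or> Lp = Lq \<and> a < b) \<and> (Lq' < Lp' \<or> Lq' = Lp' \<and> b' < a')
      \<longleftrightarrow> Lp < Lq \<and> Lq = N - 1"
    using False levels by auto
  then show ?thesis using False by simp
qed

lemma sum_indicator_eq_card:
  "finite A \<Longrightarrow> (\<Sum>x\<in>A. if P x then 1 else 0) = (of_nat (card {x \<in> A. P x}) :: 'b::semiring_1)"
  using sum_of_bool_eq[of A P] by (simp add: of_bool_def Int_def conj_commute)

locale level_shift =
  fixes N :: nat and X :: "'a set" and \<sigma> :: "'a \<Rightarrow> 'a"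
    and level pos shift :: "'a \<Rightarrow> int"
  assumes finite_X: "finite X"
    and permutes_X: "\<sigma> permutes X"
    and inj_coords: "inj_on (\<lambda>z. (level z, pos z)) X"
    and level_range: "z \<in> X \<Longrightarrow> 0 \<le> level z \<and> level z < int N"
    and pos_range: "z \<in> X \<Longrightarrow> 0 \<le> pos z \<and> pos z < 2 * int N"
    and level_step: "z \<in> X \<Longrightarrow> level (\<sigma> z) = (level z + 1) mod int N"
    and pos_step: "z \<in> X \<Longrightarrow> pos (\<sigma> z) = (pos z + shift z) mod (2 * int N)"
    and shift_range: "z \<in> X \<Longrightarrow> shift z \<in> {pos z mod 2, pos z mod 2 + 1}"
begin

abbreviation last_pos :: int where
  "last_pos \<equiv> 2 * int N - 1"

definition key :: "'a \<Rightarrow> int" where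
  "key z = 2 * int N * level z + pos z"

definition level_set :: "int \<Rightarrow> 'a set" where
  "level_set k = {z \<in> X. level z = k}"

definition level_size :: nat where
  "level_size = card (level_set 0)"

definition wrap_count :: nat where
  "wrap_count = card {z \<in> X. pos z = last_pos}"

definition crossing :: "'a \<Rightarrow> 'a \<Rightarrow> bool" where
  "crossing p q \<longleftrightarrow> shift p = 2 \<and> shift q = 0 \<and> level p = level q
     \<and> pos q = (pos p + 1) mod (2 * int N)"

lemma \<sigma>_in_X: "z \<in> X \<Longrightarrow> \<sigma> z \<in> X"
  using permutes_X by (simp add: permutes_in_image)

lemma \<sigma>_eq_iff: "\<sigma> p = \<sigma> q \<longleftrightarrow> p = q"
  using permutes_X by (metis permutes_inj injD)

lemma key_less_iff:
  assumes "p \<in> X" "q \<in> X"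
  shows "key p < key q \<longleftrightarrow> level p < level q \<or> level p = level q \<and> pos p < pos q"
proof -
  have "2 * int N * l + x < 2 * int N * l' + y" if "l < l'" "x < 2 * int N" "0 \<le> y" for l l' x y
  proof -
    have "2 * int N * (l + 1) \<le> 2 * int N * l'" using that by (intro mult_left_mono) auto
    then show ?thesis using that by (simp add: algebra_simps)
  qed
  moreover note pos_range[OF assms(1)] pos_range[OF assms(2)]
  ultimately show ?thesis
    unfolding key_def by (cases "level p < level q"; cases "level q < level p") force+
qed

lemma inj_on_key: "inj_on key X"
proof (rule inj_onI)
  fix p q assume "p \<in> X" "q \<in> X" "key p = key q"
  then have "level p = level q \<and> pos p = pos q"
    using key_less_iff[of p q] key_less_iff[of q p] by auto
  then show "p = q" using inj_coords \<open>p \<in> X\<close> \<open>q \<in> X\<close> by (auto dest: inj_onD)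
qed

text \<open>A crossing over the last position of a level is not an inversion; it appears as the
  correction term on the left.\<close>

lemma inversion_pair_identity:
  assumes p: "p \<in> X" and q: "q \<in> X"
  shows "(if key p < key q \<and> key (\<sigma> q) < key (\<sigma> p) then 1 else 0)
       + (if crossing q p \<and> pos q = last_pos then 1 else 0)
     = (if level p < level q \<and> level q = int N - 1 then 1 else 0)
       + (if level p = level q \<and> pos q = last_pos \<and> p \<noteq> q then 1 else 0)
       + (if crossing p q \<and> pos p \<noteq> last_pos then 1 else (0::nat))"
proof -
  have distinct: "(pos p + shift p) mod (2 * int N) \<noteq> (pos q + shift q) mod (2 * int N)"
    if "level p = level q" "pos p \<noteq> pos q"
  proof
    assume "(pos p + shift p) mod (2 * int N) = (pos q + shift q) mod (2 * int N)"
    then have "\<sigma> p = \<sigma> q"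
      using that inj_onD[OF inj_coords _ \<sigma>_in_X[OF p] \<sigma>_in_X[OF q]]
      by (simp add: level_step p q pos_step)
    then show False using that \<sigma>_eq_iff by auto
  qed
  have "p \<noteq> q \<longleftrightarrow> pos p \<noteq> pos q" if "level p = level q"
    using that inj_coords p q by (auto dest: inj_onD)
  moreover have "key p < key q \<and> key (\<sigma> q) < key (\<sigma> p) \<longleftrightarrow>
      (level p < level q \<or> level p = level q \<and> pos p < pos q) \<and>
      (level (\<sigma> q) < level (\<sigma> p) \<or> level (\<sigma> q) = level (\<sigma> p) \<and> pos (\<sigma> q) < pos (\<sigma> p))"
    using key_less_iff[OF p q] key_less_iff[OF \<sigma>_in_X[OF q] \<sigma>_in_X[OF p]] by simp
  moreover note pair_inversion_identity[of "level p" "int N" "level q" "pos p" "shift p" "pos q" "shift q"]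
  ultimately show ?thesis
    using level_range[OF p] level_range[OF q] pos_range[OF p] pos_range[OF q]
      shift_range[OF p] shift_range[OF q] distinct
    unfolding crossing_def level_step[OF p] level_step[OF q] pos_step[OF p] pos_step[OF q]
    by (simp only: simp_thms) (smt (verit))
qed

lemma image_level_set:
  assumes "0 \<le> k" "k < int N"
  shows "\<sigma> ` level_set k = level_set ((k + 1) mod int N)"
proof
  show "\<sigma> ` level_set k \<subseteq> level_set ((k + 1) mod int N)"
    using \<sigma>_in_X level_step by (auto simp: level_set_def)
next
  show "level_set ((k + 1) mod int N) \<subseteq> \<sigma> ` level_set k"
  proof
    fix y assume y: "y \<in> level_set ((k + 1) mod int N)"
    then obtain z where z: "z \<in> X" "y = \<sigma> z"
      using permutes_image[OF permutes_X] by (auto simp: level_set_def)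
    then have "(level z + 1) mod int N = (k + 1) mod int N"
      using y level_step by (simp add: level_set_def)
    moreover have "0 \<le> level z" "level z < int N" using level_range[OF z(1)] by auto
    ultimately have "level z = k"
      using assms mod_eq_if_less_double[of "level z + 1" "int N"] mod_eq_if_less_double[of "k + 1" "int N"]
      by (auto split: if_splits)
    then show "y \<in> \<sigma> ` level_set k" using z by (auto simp: level_set_def)
  qed
qed

lemma card_level_set:
  assumes "0 \<le> k" "k < int N"
  shows "card (level_set k) = level_size"
proof -
  have "card (level_set (int i)) = level_size" if "i < N" for i
    using that
  proof (induction i)
    case 0
    then show ?case by (simp add: level_size_def)
  next
    case (Suc i)
    have "inj_on \<sigma> (level_set (int i))" using \<sigma>_eq_iff by (auto simp: inj_on_def)
    moreover have "\<sigma> ` level_set (int i) = level_set (int (Suc i))"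
      using Suc.prems image_level_set[of "int i"] by (simp add: add.commute)
    ultimately show ?case using Suc by (metis card_image Suc_lessD)
  qed
  moreover obtain i where "k = int i" using assms(1) nonneg_int_cases by blast
  ultimately show ?thesis using assms(2) by simp
qed

lemma card_below_level:
  "k \<le> N \<Longrightarrow> card {z \<in> X. level z < int k} = k * level_size"
proof (induction k)
  case 0
  have "{z \<in> X. level z < int 0} = {}" using level_range by force
  then show ?case by (metis card.empty mult_0)
next
  case (Suc k)
  have "{z \<in> X. level z < int (Suc k)} = {z \<in> X. level z < int k} \<union> level_set (int k)"
    by (auto simp: level_set_def)
  then show ?case
    using Suc card_level_set[of "int k"] finite_X
    by (simp add: card_Un_disjoint level_set_def disjoint_iff)
qed

lemma card_X: "card X = N * level_size"
proof -
  have "{z \<in> X. level z < int N} = X" using level_range by auto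
  then show ?thesis using card_below_level[of N] by simp
qed

lemma sum_level_wrap:
  "(\<Sum>p\<in>X. \<Sum>q\<in>X. if level p < level q \<and> level q = int N - 1 then 1 else 0::nat)
     = (N - 1) * level_size * level_size"
proof (cases "N = 0")
  case True
  then have "X = {}" using level_range by force
  then show ?thesis unfolding level_size_def level_set_def by simp
next
  case False
  have "(\<Sum>p\<in>X. \<Sum>q\<in>X. if level p < level q \<and> level q = int N - 1 then 1 else 0::nat)
      = (\<Sum>p\<in>X. if level p < int N - 1 then 1 else 0) * (\<Sum>q\<in>X. if level q = int N - 1 then 1 else 0::nat)"
    unfolding sum_product by (intro sum.cong refl) auto
  also have "\<dots> = card {z \<in> X. level z < int (N - 1)} * card (level_set (int N - 1))"
    using finite_X False by (simp add: sum_indicator_eq_card level_set_def)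
  also have "\<dots> = (N - 1) * level_size * level_size"
    using card_below_level[of "N - 1"] card_level_set[of "int N - 1"] False by simp
  finally show ?thesis .
qed

lemma sum_same_level_top:
  "(\<Sum>p\<in>X. \<Sum>q\<in>X. if level p = level q \<and> pos q = last_pos \<and> p \<noteq> q then 1 else 0::nat)
     + wrap_count = wrap_count * level_size"
proof -
  have "(\<Sum>p\<in>X. if level p = level q \<and> pos q = last_pos \<and> p \<noteq> q then 1 else 0)
        + (if pos q = last_pos then 1 else 0)
      = (if pos q = last_pos then level_size else 0::nat)" if q: "q \<in> X" for q
  proof (cases "pos q = last_pos")
    case True
    have "{p \<in> X. level p = level q \<and> pos q = last_pos \<and> p \<noteq> q} = level_set (level q) - {q}"
      using True by (auto simp: level_set_def)
    then have "(\<Sum>p\<in>X. if level p = level q \<and> pos q = last_pos \<and> p \<noteq> q then 1 else 0)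
        = card (level_set (level q) - {q})"
      using finite_X by (simp add: sum_indicator_eq_card)
    moreover have "q \<in> level_set (level q)" "finite (level_set (level q))"
      using q finite_X by (auto simp: level_set_def)
    moreover have "card (level_set (level q)) = level_size"
      using card_level_set level_range[OF q] by simp
    ultimately show ?thesis
      using True card_Diff_singleton[of q "level_set (level q)"] card_gt_0_iff[of "level_set (level q)"]
      by fastforce
  qed simp
  then have "(\<Sum>q\<in>X. \<Sum>p\<in>X. if level p = level q \<and> pos q = last_pos \<and> p \<noteq> q then 1 else 0)
        + (\<Sum>q\<in>X. if pos q = last_pos then 1 else 0)
      = (\<Sum>q\<in>X. if pos q = last_pos then 1 else 0::nat) * level_size"
    unfolding sum.distrib[symmetric] sum_distrib_right by (intro sum.cong) auto
  moreover have "(\<Sum>q\<in>X. if pos q = last_pos then 1 else 0) = wrap_count"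
    using finite_X by (simp add: sum_indicator_eq_card wrap_count_def)
  ultimately show ?thesis by (subst sum.swap) simp
qed

definition crossing_pairs :: "('a \<times> 'a) set" where
  "crossing_pairs = {(p, q) \<in> X \<times> X. crossing p q}"

lemma sum_crossing_split:
  "(\<Sum>p\<in>X. \<Sum>q\<in>X. if crossing q p \<and> pos q = last_pos then 1 else 0)
     + (\<Sum>p\<in>X. \<Sum>q\<in>X. if crossing p q \<and> pos p \<noteq> last_pos then 1 else 0)
   = card crossing_pairs"
proof -
  have swap: "(\<Sum>p\<in>X. \<Sum>q\<in>X. if crossing q p \<and> pos q = last_pos then 1 else 0)
      = (\<Sum>p\<in>X. \<Sum>q\<in>X. if crossing p q \<and> pos p = last_pos then 1 else (0::nat))"
    by (rule sum.swap)
  have "card crossing_pairs = (\<Sum>z\<in>X \<times> X. if crossing (fst z) (snd z) then 1 else 0)"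
  proof -
    have "crossing_pairs = {z \<in> X \<times> X. crossing (fst z) (snd z)}"
      by (auto simp: crossing_pairs_def)
    then show ?thesis using finite_X by (simp add: sum_indicator_eq_card)
  qed
  also have "\<dots> = (\<Sum>p\<in>X. \<Sum>q\<in>X. if crossing p q then 1 else 0)"
    by (simp add: sum.cartesian_product case_prod_beta)
  also have "\<dots> = (\<Sum>p\<in>X. \<Sum>q\<in>X. if crossing p q \<and> pos p = last_pos then 1 else 0)
     + (\<Sum>p\<in>X. \<Sum>q\<in>X. if crossing p q \<and> pos p \<noteq> last_pos then 1 else 0)"
    unfolding sum.distrib[symmetric] by (intro sum.cong refl) auto
  finally show ?thesis using swap by simp
qed

text \<open>Crossings not over the last position are counted both as inversions and in
  \<open>crossing_pairs\<close>, whence the even term \<open>2 * E\<close>.\<close>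

lemma inversions_key_count:
  obtains E where "inversions key (key \<circ> \<sigma>) X + card crossing_pairs + wrap_count
    = (N - 1) * level_size * level_size + wrap_count * level_size + 2 * E"
proof
  let ?E = "\<Sum>p\<in>X. \<Sum>q\<in>X. if crossing p q \<and> pos p \<noteq> last_pos then 1 else 0::nat"
  have "inversions key (key \<circ> \<sigma>) X
        + (\<Sum>p\<in>X. \<Sum>q\<in>X. if crossing q p \<and> pos q = last_pos then 1 else 0)
      = (\<Sum>p\<in>X. \<Sum>q\<in>X. (if level p < level q \<and> level q = int N - 1 then 1 else 0)
         + (if level p = level q \<and> pos q = last_pos \<and> p \<noteq> q then 1 else 0)
         + (if crossing p q \<and> pos p \<noteq> last_pos then 1 else 0))"
    unfolding inversions_def sum.distrib[symmetric]
    by (intro sum.cong refl) (simp add: inversion_pair_identity)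
  also have "\<dots> = (N - 1) * level_size * level_size
      + (\<Sum>p\<in>X. \<Sum>q\<in>X. if level p = level q \<and> pos q = last_pos \<and> p \<noteq> q then 1 else 0)
      + ?E"
    by (simp add: sum.distrib sum_level_wrap)
  finally show "inversions key (key \<circ> \<sigma>) X + card crossing_pairs + wrap_count
      = (N - 1) * level_size * level_size + wrap_count * level_size + 2 * ?E"
    using sum_same_level_top sum_crossing_split by simp
qed

theorem sign_mult_crossings:
  "sign \<sigma> * (-1) ^ card crossing_pairs = (-1) ^ ((N - 1) * level_size + (level_size + 1) * wrap_count)"
proof -
  obtain E where E: "inversions key (key \<circ> \<sigma>) X + card crossing_pairs + wrap_count
    = (N - 1) * level_size * level_size + wrap_count * level_size + 2 * E"
    by (rule inversions_key_count)
  have parity: "even (inversions key (key \<circ> \<sigma>) X + card crossing_pairs)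
      \<longleftrightarrow> even ((N - 1) * level_size + (level_size + 1) * wrap_count)"
    using arg_cong[OF E, of even] by auto
  have "sign \<sigma> * (-1) ^ card crossing_pairs = (-1) ^ (inversions key (key \<circ> \<sigma>) X + card crossing_pairs)"
    using sign_eq_inversions[OF finite_X inj_on_key permutes_X] by (simp add: power_add)
  also have "\<dots> = (-1) ^ ((N - 1) * level_size + (level_size + 1) * wrap_count)"
    by (simp only: minus_one_power_iff parity)
  finally show ?thesis .
qed

text \<open>\<open>pos \<circ> \<sigma>\<close> and \<open>pos\<close> have the same sum over \<open>X\<close>, and each move past the last
  position loses \<open>2N\<close>.\<close>

lemma sum_shift: "(\<Sum>z\<in>X. shift z) = 2 * int N * int wrap_count"
proof -
  have step: "pos (\<sigma> z) = pos z + shift z - 2 * int N * (if pos z = last_pos then 1 else 0)"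
    if z: "z \<in> X" for z
  proof -
    note wrap = shift_parity_facts[of "pos z" N "shift z"]
    have "pos (\<sigma> z) = (if 2 * int N \<le> pos z + shift z then pos z + shift z - 2 * int N else pos z + shift z)"
      unfolding pos_step[OF z]
      by (rule mod_eq_if_less_double; use pos_range[OF z] shift_range[OF z] wrap(2,3) in presburger)
    then show ?thesis using pos_range[OF z] shift_range[OF z] wrap(1) by simp
  qed
  have "(\<Sum>z\<in>X. pos z) = (\<Sum>z\<in>X. pos (\<sigma> z))"
    using sum.reindex_bij_betw[OF permutes_imp_bij[OF permutes_X], of pos] by simp
  also have "\<dots> = (\<Sum>z\<in>X. pos z) + (\<Sum>z\<in>X. shift z)
      - 2 * int N * (\<Sum>z\<in>X. if pos z = last_pos then 1 else 0)"
    by (simp add: step sum.distrib sum_subtractf sum_distrib_left)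
  finally show ?thesis
    using finite_X by (simp add: sum_indicator_eq_card wrap_count_def)
qed

end

section \<open>Snake configurations\<close>

text \<open>Along an anti-diagonal the mid-edges alternate: white \<open>(i,j) + e2/2\<close> at position \<open>2i\<close>,
  black \<open>(i,j) + e1/2\<close> at \<open>2i + 1\<close>. A move by \<open>e3\<close> advances the position by 1, a black
  move by \<open>e1\<close> by 2, a white move by \<open>e2\<close> by 0.\<close>

definition diagonal :: "nat \<Rightarrow> midedge \<Rightarrow> int" where
  "diagonal n z = (case z of (c, i, j) \<Rightarrow> (i + j) mod int n)"

definition diagonal_pos :: "midedge \<Rightarrow> int" where
  "diagonal_pos z = (case z of (c, i, j) \<Rightarrow> 2 * i + (if c then 1 else 0))"

definition snake_shift :: "nat \<Rightarrow> (midedge \<Rightarrow> midedge) \<Rightarrow> midedge \<Rightarrow> int" where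
  "snake_shift n \<rho> z = (if \<rho> z = tr_e1 n z then 2 else if \<rho> z = tr_e3 n z then 1 else 0)"

definition moved :: "nat \<Rightarrow> (midedge \<Rightarrow> midedge) \<Rightarrow> midedge set" where
  "moved n \<rho> = {z \<in> midedges n. \<rho> z \<noteq> z}"

lemma finite_midedges: "finite (midedges n)"
proof -
  have "midedges n \<subseteq> UNIV \<times> {0..<int n} \<times> {0..<int n}" by (auto simp: midedges_def)
  then show ?thesis by (rule finite_subset) auto
qed

lemma mod_succ_eq_if:
  fixes i m :: int
  assumes "0 \<le> i" "i < m"
  shows "(i + 1) mod m = (if i = m - 1 then 0 else i + 1)"
  using assms by (subst mod_eq_if_less_double) auto

lemma translations_distinct:
  assumes "2 \<le> n" "z \<in> midedges n"
  shows "tr_e1 n z \<noteq> z" "tr_e2 n z \<noteq> z" "tr_e3 n z \<noteq> z"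
    "tr_e1 n z \<noteq> tr_e3 n z" "tr_e2 n z \<noteq> tr_e3 n z" "tr_e1 n z \<noteq> tr_e2 n z"
proof -
  obtain c i j where z: "z = (c, i, j)" by (cases z) auto
  have r: "0 \<le> i" "i < int n" "0 \<le> j" "j < int n" using assms z by (auto simp: midedges_def)
  have "(i + 1) mod int n \<noteq> i" "(j + 1) mod int n \<noteq> j"
    using mod_succ_eq_if[OF r(1,2)] mod_succ_eq_if[OF r(3,4)] assms(1) by auto
  then show "tr_e1 n z \<noteq> z" "tr_e2 n z \<noteq> z" "tr_e3 n z \<noteq> z"
    "tr_e1 n z \<noteq> tr_e3 n z" "tr_e2 n z \<noteq> tr_e3 n z" "tr_e1 n z \<noteq> tr_e2 n z"
    by (auto simp: z tr_e1_def tr_e2_def tr_e3_def)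
qed

lemma diagonal_translate:
  "diagonal n (tr_e3 n z) = (diagonal n z + 1) mod int n"
  "fst z \<Longrightarrow> diagonal n (tr_e1 n z) = (diagonal n z + 1) mod int n"
  "\<not> fst z \<Longrightarrow> diagonal n (tr_e2 n z) = (diagonal n z + 1) mod int n"
  by (auto simp: diagonal_def tr_e1_def tr_e2_def tr_e3_def mod_simps ac_simps split: prod.splits)

lemma diagonal_pos_translate:
  assumes "z \<in> midedges n"
  shows "diagonal_pos (tr_e3 n z) = (diagonal_pos z + 1) mod (2 * int n)"
    "fst z \<Longrightarrow> diagonal_pos (tr_e1 n z) = (diagonal_pos z + 2) mod (2 * int n)"
    "\<not> fst z \<Longrightarrow> diagonal_pos (tr_e2 n z) = diagonal_pos z mod (2 * int n)"
proof -
  obtain c i j where z: "z = (c, i, j)" by (cases z) auto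
  have r: "0 \<le> i" "i < int n" using assms z by (auto simp: midedges_def)
  note m = mod_eq_if_less_double[of _ "2 * int n"]
  show "diagonal_pos (tr_e3 n z) = (diagonal_pos z + 1) mod (2 * int n)"
  proof (cases c)
    case True
    then show ?thesis
      using r by (cases "i = int n - 1") (auto simp: z tr_e3_def diagonal_pos_def mod_succ_eq_if m)
  qed (use r in \<open>auto simp: z tr_e3_def diagonal_pos_def m\<close>)
  show "fst z \<Longrightarrow> diagonal_pos (tr_e1 n z) = (diagonal_pos z + 2) mod (2 * int n)"
    using r by (cases "i = int n - 1") (auto simp: z tr_e1_def diagonal_pos_def mod_succ_eq_if m)
  show "\<not> fst z \<Longrightarrow> diagonal_pos (tr_e2 n z) = diagonal_pos z mod (2 * int n)"
    using r by (auto simp: z tr_e2_def diagonal_pos_def m)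
qed

lemma diagonal_coords_inj: "inj_on (\<lambda>z. (diagonal n z, diagonal_pos z)) (midedges n)"
proof (rule inj_onI)
  fix p q
  assume M: "p \<in> midedges n" "q \<in> midedges n"
    and eq: "(diagonal n p, diagonal_pos p) = (diagonal n q, diagonal_pos q)"
  obtain c i j c' i' j' where p: "p = (c, i, j)" and q: "q = (c', i', j')"
    by (cases p, cases q) auto
  have ci: "c = c' \<and> i = i'"
    using eq by (cases c; cases c'; simp add: p q diagonal_pos_def; presburger)
  then have "(i + j) mod int n = (i + j') mod int n"
    using eq by (simp add: p q diagonal_def)
  then have "((i + j) - i) mod int n = ((i + j') - i) mod int n" by (rule mod_diff_cong) simp
  then have "j = j'" using M by (simp add: p q midedges_def)
  then show "p = q" using ci by (simp add: p q)
qed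

locale snake =
  fixes n :: nat and \<rho> :: "midedge \<Rightarrow> midedge"
  assumes two_le_n: "2 \<le> n" and snake_config: "\<rho> \<in> GS n"
begin

lemma permutes_midedges: "\<rho> permutes midedges n"
  using snake_config by (simp add: GS_def)

lemma move_cases:
  assumes "z \<in> moved n \<rho>"
  obtains "fst z" "\<rho> z = tr_e1 n z" "snake_shift n \<rho> z = 2"
    | "\<rho> z = tr_e3 n z" "snake_shift n \<rho> z = 1"
    | "\<not> fst z" "\<rho> z = tr_e2 n z" "snake_shift n \<rho> z = 0"
proof -
  have z: "z \<in> midedges n" "\<rho> z \<noteq> z" using assms by (auto simp: moved_def)
  note distinct = translations_distinct[OF two_le_n z(1)]
  have "fst z \<longrightarrow> \<rho> z \<in> {z, tr_e3 n z, tr_e1 n z}" "\<not> fst z \<longrightarrow> \<rho> z \<in> {z, tr_e3 n z, tr_e2 n z}"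
    using snake_config z(1) by (auto simp: GS_def)
  then show ?thesis
    using that z(2) distinct by (cases "fst z") (auto simp: snake_shift_def)
qed

sublocale level_shift n "moved n \<rho>" \<rho> "diagonal n" diagonal_pos "snake_shift n \<rho>"
proof
  show "finite (moved n \<rho>)"
    using finite_midedges by (simp add: moved_def)
  show "\<rho> permutes moved n \<rho>"
    using permutes_midedges by (rule permutes_superset) (simp add: moved_def)
  show "inj_on (\<lambda>z. (diagonal n z, diagonal_pos z)) (moved n \<rho>)"
    using diagonal_coords_inj by (rule inj_on_subset) (auto simp: moved_def)
  fix z assume z: "z \<in> moved n \<rho>"
  then have M: "z \<in> midedges n" by (simp add: moved_def)
  then obtain c i j where z_eq: "z = (c, i, j)" "0 \<le> i" "i < int n" "0 \<le> j" "j < int n"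
    by (cases z) (auto simp: midedges_def)
  show "0 \<le> diagonal n z \<and> diagonal n z < int n"
    using two_le_n by (simp add: z_eq diagonal_def)
  show "0 \<le> diagonal_pos z \<and> diagonal_pos z < 2 * int n"
    using z_eq by (auto simp: diagonal_pos_def)
  have parity: "diagonal_pos z mod 2 = (if fst z then 1 else 0)"
    by (simp add: z_eq diagonal_pos_def)
  show "snake_shift n \<rho> z \<in> {diagonal_pos z mod 2, diagonal_pos z mod 2 + 1}"
    by (rule move_cases[OF z]; use parity in auto)
  show "diagonal n (\<rho> z) = (diagonal n z + 1) mod int n"
    by (rule move_cases[OF z]) (simp_all add: diagonal_translate)
  have "0 \<le> diagonal_pos z" "diagonal_pos z < 2 * int n"
    using z_eq by (auto simp: diagonal_pos_def)
  note facts = this diagonal_pos_translate[OF M]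
  show "diagonal_pos (\<rho> z) = (diagonal_pos z + snake_shift n \<rho> z) mod (2 * int n)"
    by (rule move_cases[OF z]; use facts in simp)
qed

lemma crossing_pair_at_vertex_iff:
  assumes i: "0 \<le> i" "i < int n" and j: "0 \<le> j" "j < int n"
  defines "p \<equiv> (True, (i - 1) mod int n, j)" and "q \<equiv> (False, i, (j - 1) mod int n)"
  shows "(p, q) \<in> crossing_pairs \<longleftrightarrow> \<rho> p = (True, i, j) \<and> \<rho> q = (False, i, j)"
proof -
  have M: "p \<in> midedges n" "q \<in> midedges n"
    using i j two_le_n by (auto simp: p_def q_def midedges_def)
  have succ_pred: "((k - 1) mod int n + 1) mod int n = k" if "0 \<le> k" "k < int n" for k
    using that by (simp add: mod_simps)
  have tr: "tr_e1 n p = (True, i, j)" "tr_e2 n q = (False, i, j)"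
    using succ_pred i j by (simp_all add: p_def q_def tr_e1_def tr_e2_def)
  have "diagonal n p = diagonal n q"
    by (simp add: p_def q_def diagonal_def mod_simps algebra_simps)
  moreover have "diagonal_pos q = (diagonal_pos p + 1) mod (2 * int n)"
  proof -
    have "diagonal_pos p + 1 = 2 * ((i - 1) mod int n + 1)"
      by (simp add: p_def diagonal_pos_def)
    then have "(diagonal_pos p + 1) mod (2 * int n) = 2 * (((i - 1) mod int n + 1) mod int n)"
      by (simp only: mod_mult_mult1)
    then show ?thesis using succ_pred i by (simp add: q_def diagonal_pos_def)
  qed
  moreover have "p \<in> moved n \<rho> \<and> snake_shift n \<rho> p = 2 \<longleftrightarrow> \<rho> p = tr_e1 n p"
    using M translations_distinct[OF two_le_n M(1)] by (auto simp: moved_def snake_shift_def)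
  moreover have "q \<in> moved n \<rho> \<and> snake_shift n \<rho> q = 0 \<longleftrightarrow> \<rho> q = tr_e2 n q"
    using M snake_config translations_distinct[OF two_le_n M(2)]
    by (auto simp: moved_def snake_shift_def GS_def q_def)
  ultimately show ?thesis
    using tr by (auto simp: crossing_pairs_def crossing_def)
qed

lemma crossing_pair_at_vertex:
  assumes "(p, q) \<in> crossing_pairs"
  obtains i j where "0 \<le> i" "i < int n" "0 \<le> j" "j < int n"
    "p = (True, (i - 1) mod int n, j)" "q = (False, i, (j - 1) mod int n)"
proof -
  have p: "p \<in> moved n \<rho>" and q: "q \<in> moved n \<rho>" and cr: "crossing p q"
    using assms by (auto simp: crossing_pairs_def)
  have "fst p" using cr by (cases rule: move_cases[OF p]) (auto simp: crossing_def)
  moreover have "\<not> fst q" using cr by (cases rule: move_cases[OF q]) (auto simp: crossing_def)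
  ultimately obtain i0 j0 i1 j1 where pq: "p = (True, i0, j0)" "q = (False, i1, j1)"
    by (cases p, cases q) auto
  have r: "0 \<le> i0" "i0 < int n" "0 \<le> j0" "j0 < int n" "0 \<le> i1" "i1 < int n" "0 \<le> j1" "j1 < int n"
    using p q by (auto simp: pq moved_def midedges_def)
  have "2 * i1 = (2 * (i0 + 1)) mod (2 * int n)"
    using cr by (simp add: crossing_def pq diagonal_pos_def add.commute)
  then have "2 * i1 = 2 * ((i0 + 1) mod int n)"
    by (simp only: mod_mult_mult1)
  then have i1: "i1 = (i0 + 1) mod int n" by simp
  then have i0: "i0 = (i1 - 1) mod int n"
    using r by (simp add: mod_simps)
  have "(i0 + j0) mod int n = (i1 + j1) mod int n"
    using cr by (simp add: crossing_def pq diagonal_def)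
  then have "(i0 + j0 - i1) mod int n = (i1 + j1 - i1) mod int n"
    by (rule mod_diff_cong) simp
  then have "j1 = (j0 - 1) mod int n"
    using r i1 by (simp add: mod_simps algebra_simps)
  then show ?thesis using that r(5-8) r(3,4) i0 pq by blast
qed

lemma crossings_eq_card_crossing_pairs: "crossings n \<rho> = card crossing_pairs"
proof -
  define V where "V = {(i, j). 0 \<le> i \<and> i < int n \<and> 0 \<le> j \<and> j < int n \<and>
      \<rho> (True, (i - 1) mod int n, j) = (True, i, j) \<and>
      \<rho> (False, i, (j - 1) mod int n) = (False, i, j)}"
  define entering :: "int \<times> int \<Rightarrow> midedge \<times> midedge" where
    "entering v = ((True, (fst v - 1) mod int n, snd v), (False, fst v, (snd v - 1) mod int n))" for v
  have "inj_on entering V" by (auto simp: inj_on_def entering_def)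
  moreover have "entering ` V = crossing_pairs"
  proof
    show "entering ` V \<subseteq> crossing_pairs"
    proof
      fix x assume "x \<in> entering ` V"
      then obtain i j where "(i, j) \<in> V" "x = entering (i, j)" by auto
      then show "x \<in> crossing_pairs"
        using crossing_pair_at_vertex_iff[of i j] by (simp add: V_def entering_def)
    qed
    show "crossing_pairs \<subseteq> entering ` V"
    proof (clarify)
      fix p q assume pq: "(p, q) \<in> crossing_pairs"
      then obtain i j where ij: "0 \<le> i" "i < int n" "0 \<le> j" "j < int n"
        "p = (True, (i - 1) mod int n, j)" "q = (False, i, (j - 1) mod int n)"
        by (rule crossing_pair_at_vertex)
      then have "(i, j) \<in> V" using pq crossing_pair_at_vertex_iff by (simp add: V_def)
      then show "(p, q) \<in> entering ` V" using ij by (force simp: entering_def)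
    qed
  qed
  moreover have "crossings n \<rho> = card V" by (simp add: crossings_def V_def)
  ultimately show ?thesis by (metis card_image)
qed

lemma sum_snake_shift: "(\<Sum>z\<in>moved n \<rho>. snake_shift n \<rho> z) = 2 * int (countA n \<rho>) + int (countC n \<rho>)"
proof -
  have shift_eq: "snake_shift n \<rho> z = 2 * (if \<rho> z = tr_e1 n z then 1 else 0)
      + (if \<rho> z = tr_e3 n z then 1 else 0)" if "z \<in> midedges n" for z
    using translations_distinct[OF two_le_n that] by (simp add: snake_shift_def)
  have "(\<Sum>z\<in>moved n \<rho>. snake_shift n \<rho> z) = (\<Sum>z\<in>midedges n. snake_shift n \<rho> z)"
  proof (rule sum.mono_neutral_left[OF finite_midedges])
    show "moved n \<rho> \<subseteq> midedges n" by (auto simp: moved_def)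
    have "snake_shift n \<rho> z = 0" if "z \<in> midedges n" "\<rho> z = z" for z
      using translations_distinct[OF two_le_n that(1)] that(2) by (simp add: snake_shift_def)
    then show "\<forall>z\<in>midedges n - moved n \<rho>. snake_shift n \<rho> z = 0" by (simp add: moved_def)
  qed
  also have "\<dots> = (\<Sum>z\<in>midedges n. 2 * (if \<rho> z = tr_e1 n z then 1 else 0)
      + (if \<rho> z = tr_e3 n z then 1 else 0))"
    using shift_eq by (rule sum.cong[OF refl])
  also have "\<dots> = 2 * (\<Sum>z\<in>midedges n. if \<rho> z = tr_e1 n z then 1 else 0)
      + (\<Sum>z\<in>midedges n. if \<rho> z = tr_e3 n z then 1 else 0)"
    by (simp add: sum.distrib sum_distrib_left)
  also have "\<dots> = 2 * int (countA n \<rho>) + int (countC n \<rho>)"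
    using finite_midedges by (simp only: sum_indicator_eq_card countA_def countC_def)
  finally show ?thesis .
qed

lemma card_moved: "card (moved n \<rho>) = countA n \<rho> + countB n \<rho> + countC n \<rho>"
proof -
  have "card (moved n \<rho>) = (\<Sum>z\<in>midedges n. if \<rho> z \<noteq> z then 1 else 0)"
    using finite_midedges by (simp add: sum_indicator_eq_card moved_def)
  also have "\<dots> = (\<Sum>z\<in>midedges n. (if \<rho> z = tr_e1 n z then 1 else 0)
      + (if \<rho> z = tr_e2 n z then 1 else 0) + (if \<rho> z = tr_e3 n z then 1 else 0))"
  proof (intro sum.cong refl)
    fix z assume z: "z \<in> midedges n"
    note distinct = translations_distinct[OF two_le_n z]
    show "(if \<rho> z \<noteq> z then 1 else 0) = (if \<rho> z = tr_e1 n z then 1 else 0)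
      + (if \<rho> z = tr_e2 n z then 1 else 0) + (if \<rho> z = tr_e3 n z then (1::nat) else 0)"
    proof (cases "\<rho> z = z")
      case False
      then have "z \<in> moved n \<rho>" using z by (simp add: moved_def)
      then show ?thesis
      proof (cases rule: move_cases)
        case 1
        then show ?thesis using distinct by simp
      next
        case 2
        then show ?thesis using distinct by simp
      next
        case 3
        then show ?thesis using distinct by simp
      qed
    qed (use distinct in simp)
  qed
  also have "\<dots> = countA n \<rho> + countB n \<rho> + countC n \<rho>"
    using finite_midedges
    by (simp add: sum.distrib sum_indicator_eq_card countA_def countB_def countC_def)
  finally show ?thesis .
qed

end

lemma exp_pi_i_nat: "exp (\<i> * complex_of_real (pi * real k)) = (-1) ^ k"
proof -
  have "\<i> * complex_of_real (pi * real k) = of_nat k * (\<i> * pi)" by simp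
  then show ?thesis by (simp only: exp_of_nat_mult exp_pi_i')
qed

lemma neg_one_power_expansion:
  fixes n m w :: nat and a b :: real
  assumes "n \<noteq> 0" and a: "a = real n * real w" and b: "b = real n * real m - real n * real w"
  shows "(-1) ^ ((n - 1) * m + (m + 1) * w) =
    (\<Sum>\<theta>1\<in>{0::nat,1}. \<Sum>\<theta>2\<in>{0::nat,1}.
       (1/2 * (-1) ^ ((\<theta>1 + n + 1) * (\<theta>2 + n + 1))) *
       exp (\<i> * complex_of_real (pi * real \<theta>1 / real n * a)
          + \<i> * complex_of_real (pi * real \<theta>2 / real n * b)))"
proof -
  have "exp (\<i> * complex_of_real (pi * real \<theta>1 / real n * a)
          + \<i> * complex_of_real (pi * real \<theta>2 / real n * b))
      = (-1) ^ (\<theta>1 * w + \<theta>2 * m) * (-1) ^ (\<theta>2 * w)" for \<theta>1 \<theta>2 :: nat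
  proof -
    have "\<i> * complex_of_real (pi * real \<theta>1 / real n * a) + \<i> * complex_of_real (pi * real \<theta>2 / real n * b)
        = \<i> * complex_of_real (pi * real (\<theta>1 * w + \<theta>2 * m)) - \<i> * complex_of_real (pi * real (\<theta>2 * w))"
      using assms(1) by (simp add: a b field_simps)
    then have "exp (\<i> * complex_of_real (pi * real \<theta>1 / real n * a)
          + \<i> * complex_of_real (pi * real \<theta>2 / real n * b))
        = exp (\<i> * complex_of_real (pi * real (\<theta>1 * w + \<theta>2 * m)))
          / exp (\<i> * complex_of_real (pi * real (\<theta>2 * w)))"
      by (simp add: exp_diff)
    also have "\<dots> = (-1) ^ (\<theta>1 * w + \<theta>2 * m) / (-1) ^ (\<theta>2 * w)"
      by (simp only: exp_pi_i_nat)
    also have "\<dots> = (-1) ^ (\<theta>1 * w + \<theta>2 * m) * (-1) ^ (\<theta>2 * w)"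
      by (cases "even (\<theta>2 * w)") simp_all
    finally show ?thesis .
  qed
  moreover obtain k where "n = Suc k" using assms(1) not0_implies_Suc by blast
  ultimately show ?thesis
    by (cases "even k"; cases "even m"; cases "even w") simp_all
qed

theorem lemma3p2:
  fixes n :: nat and \<rho> :: "midedge \<Rightarrow> midedge"
  assumes "n \<ge> 2" and "\<rho> \<in> GS n"
  shows "complex_of_int (sign \<rho> * (-1) ^ crossings n \<rho>) =
    (\<Sum>\<theta>1\<in>{0::nat,1}. \<Sum>\<theta>2\<in>{0::nat,1}.
       (1/2 * (-1) ^ ((\<theta>1 + n + 1) * (\<theta>2 + n + 1))) *
       exp (\<i> * complex_of_real (pi * real \<theta>1 / real n * (real (countA n \<rho>) + real (countC n \<rho>) / 2))
          + \<i> * complex_of_real (pi * real \<theta>2 / real n * (real (countB n \<rho>) + real (countC n \<rho>) / 2))))"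
proof -
  interpret snake n \<rho> using assms by unfold_locales
  have "2 * int (countA n \<rho>) + int (countC n \<rho>) = 2 * int n * int wrap_count"
    using sum_shift sum_snake_shift by simp
  then have "2 * real (countA n \<rho>) + real (countC n \<rho>) = 2 * real n * real wrap_count"
    by (metis (mono_tags) of_int_of_nat_eq of_int_add of_int_mult of_int_numeral)
  then have A: "real (countA n \<rho>) + real (countC n \<rho>) / 2 = real n * real wrap_count"
    by linarith
  have "countA n \<rho> + countB n \<rho> + countC n \<rho> = n * level_size"
    using card_X card_moved by simp
  then have "real (countA n \<rho>) + real (countB n \<rho>) + real (countC n \<rho>) = real n * real level_size"
    by (metis of_nat_add of_nat_mult)
  then have B: "real (countB n \<rho>) + real (countC n \<rho>) / 2 = real n * real level_size - real n * real wrap_count"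
    using A by linarith
  have "sign \<rho> * (-1) ^ crossings n \<rho> = (-1) ^ ((n - 1) * level_size + (level_size + 1) * wrap_count)"
    using sign_mult_crossings crossings_eq_card_crossing_pairs by simp
  then show ?thesis
    using neg_one_power_expansion[OF _ A B] assms(1) by simp
qed

end
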